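(* Let $f:\mathbb{R}^n\to\mathbb{R}$ be differentiable with $L$-Lipschitz gradient $\nabla f$. Let $\mathcal{E}^t$ denote the event $\|\nabla f(x^t)\|_\infty\le\eta$. If $x\in\mathbb{R}^n$ satisfies $\frac{L\alpha}{2}\|\nabla f(x)\|_1<\|\nabla f(x)\|_2^2$, then the iterate $x^{t+1}$ of Markov gradient descent satisfies $$\mathbb{E}\left[f(x^{t+1})\,\middle|\,x^t=x,\mathcal{E}^t\right]<f(x).$$ In particular, this holds whenever $\|\nabla f(x)\|_2>\frac{L\alpha\sqrt{n}}{2}$.
   Context: Markov gradient descent (MGD) with lattice resolution $\alpha>0$ and normalizer $\eta>0$: start at $x^0\in\alpha\mathbb{Z}^n$; at step $t$, for each coordinate $i$, conditionally on $x^t$, $\Delta^t_i\in\{0,1\}$ is Bernoulli with $\mathbb{P}[\Delta^t_i=1\mid x^t]=\min(|\partial_i f(x^t)|/\eta,1)$, and $x^{t+1}_i=x^t_i-\alpha\,\mathrm{sgn}(\partial_i f(x^t))\Delta^t_i$. *)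

theory Defs
  imports "HOL-Analysis.Analysis" "HOL-Probability.Probability"
begin

text \<open>Norms on R^n (vectors of type real^'n): sup-norm and 1-norm; the 2-norm is norm.\<close>
definition linf_norm :: "real^'n \<Rightarrow> real" where
  "linf_norm v = Max (range (\<lambda>i. \<bar>v $ i\<bar>))"

definition l1_norm :: "real^'n \<Rightarrow> real" where
  "l1_norm v = (\<Sum>i\<in>UNIV. \<bar>v $ i\<bar>)"

text \<open>One MGD step from x, given gradient vector gx and the random indicator vector d.\<close>
definition mgd_step :: "real \<Rightarrow> real^'n \<Rightarrow> real^'n \<Rightarrow> ('n \<Rightarrow> bool) \<Rightarrow> real^'n" where
  "mgd_step \<alpha> x gx d = x - (\<chi> i. \<alpha> * sgn (gx $ i) * (if d i then 1 else 0))"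

text \<open>Marginal acceptance probability of coordinate i.\<close>
definition mgd_prob :: "real \<Rightarrow> real^'n \<Rightarrow> 'n \<Rightarrow> real" where
  "mgd_prob \<eta> gx i = min (\<bar>gx $ i\<bar> / \<eta>) 1"

end

theory Submission imports Defs begin

text \<open>
  By the descent lemma, a step by the displacement s changes f by at most
  \<open>\<nabla>f(x)\<bullet>s + L/2 \<parallel>s\<parallel>\<^sup>2\<close>. An MGD step moves coordinate i by \<open>\<alpha>\<close> against the sign of
  \<open>\<partial>\<^sub>if(x)\<close>, which gains \<open>\<alpha>\<bar>\<partial>\<^sub>if(x)\<bar>\<close> and costs at most \<open>L\<alpha>\<^sup>2/2\<close>; on the event
  \<open>\<parallel>\<nabla>f(x)\<parallel>\<^sub>\<infinity> \<le> \<eta>\<close> it does so with probability exactly \<open>\<bar>\<partial>\<^sub>if(x)\<bar>/\<eta>\<close>. By linearity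
  of expectation the expected decrease is at least
  \<open>\<alpha>/\<eta> (\<parallel>\<nabla>f(x)\<parallel>\<^sub>2\<^sup>2 - L\<alpha>/2 \<parallel>\<nabla>f(x)\<parallel>\<^sub>1)\<close>, which is positive under the hypothesis.
  The second condition implies the first since \<open>\<parallel>v\<parallel>\<^sub>1 \<le> \<surd>n \<parallel>v\<parallel>\<^sub>2\<close>.
\<close>

lemma lipschitz_gradient_upper_bound:
  fixes f :: "'a::real_inner \<Rightarrow> real" and g :: "'a \<Rightarrow> 'a"
  assumes grad: "\<And>y. (f has_derivative (\<lambda>h. g y \<bullet> h)) (at y)"
    and lip: "\<And>y z. norm (g y - g z) \<le> L * norm (y - z)"
  shows "f (x + h) \<le> f x + g x \<bullet> h + L / 2 * (norm h)\<^sup>2"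
proof -
  define \<phi> where "\<phi> t = f (x + t *\<^sub>R h) - t * (g x \<bullet> h) - L / 2 * t\<^sup>2 * (norm h)\<^sup>2" for t
  have \<phi>_deriv: "(\<phi> has_real_derivative ((g (x + t *\<^sub>R h) - g x) \<bullet> h - L * t * (norm h)\<^sup>2)) (at t)"
    for t
  proof -
    have line: "((\<lambda>t. x + t *\<^sub>R h) has_derivative (\<lambda>s. s *\<^sub>R h)) (at t)"
      by (auto intro!: derivative_eq_intros)
    have "((\<lambda>t. f (x + t *\<^sub>R h)) has_derivative (\<lambda>s. g (x + t *\<^sub>R h) \<bullet> (s *\<^sub>R h))) (at t)"
      using has_derivative_compose[OF line grad] .
    then have "((\<lambda>t. f (x + t *\<^sub>R h)) has_real_derivative (g (x + t *\<^sub>R h) \<bullet> h)) (at t)"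
      unfolding has_field_derivative_def by (rule has_derivative_eq_rhs) (auto simp: fun_eq_iff)
    then show ?thesis
      unfolding \<phi>_def by (auto intro!: derivative_eq_intros simp: algebra_simps inner_diff_left)
  qed
  have "\<phi> 1 \<le> \<phi> 0"
  proof (rule DERIV_nonpos_imp_nonincreasing[of 0 1])
    fix t :: real assume t: "0 \<le> t" "t \<le> 1"
    have "(g (x + t *\<^sub>R h) - g x) \<bullet> h \<le> norm (g (x + t *\<^sub>R h) - g x) * norm h"
      by (rule norm_cauchy_schwarz)
    also have "\<dots> \<le> L * norm (t *\<^sub>R h) * norm h"
      using lip[of "x + t *\<^sub>R h" x] by (intro mult_right_mono) auto
    also have "\<dots> = L * t * (norm h)\<^sup>2"
      using t by (simp add: power2_eq_square)
    finally show "\<exists>y. DERIV \<phi> t :> y \<and> y \<le> 0"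
      using \<phi>_deriv[of t] by auto
  qed auto
  then show ?thesis
    unfolding \<phi>_def by simp
qed

lemma lipschitz_constant_nonneg:
  fixes g :: "'a::real_normed_vector \<Rightarrow> 'b::real_normed_vector" and a b :: 'a
  assumes lip: "\<And>y z. norm (g y - g z) \<le> L * norm (y - z)" and "a \<noteq> b"
  shows "L \<ge> 0"
proof -
  have "0 \<le> L * norm (a - b)"
    using lip[of a b] norm_ge_zero[of "g a - g b"] by linarith
  then show ?thesis
    using \<open>a \<noteq> b\<close> by (simp add: zero_le_mult_iff)
qed

lemma abs_nth_le_linf_norm: "\<bar>v $ i\<bar> \<le> linf_norm v"
  unfolding linf_norm_def by (rule Max_ge) auto

lemma l1_norm_le_sqrt_card_mult_norm:
  fixes v :: "real^'n"
  shows "l1_norm v \<le> sqrt (CARD('n)) * norm v"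
proof -
  have "l1_norm v = (\<chi> i. \<bar>v $ i\<bar>) \<bullet> (\<chi> i. 1)"
    unfolding l1_norm_def inner_vec_def by simp
  also have "\<dots> \<le> norm (\<chi> i. \<bar>v $ i\<bar>) * norm ((\<chi> i. 1) :: real^'n)"
    by (rule norm_cauchy_schwarz)
  also have "norm (\<chi> i. \<bar>v $ i\<bar>) = norm v"
    unfolding norm_vec_def by simp
  also have "norm ((\<chi> i. 1) :: real^'n) = sqrt (CARD('n))"
    unfolding norm_vec_def L2_set_def by simp
  finally show ?thesis
    by (simp add: mult.commute)
qed

lemma l1_norm_bound_if_norm_large:
  fixes v :: "real^'n"
  assumes "0 \<le> c" and large: "c * sqrt (CARD('n)) < norm v"
  shows "c * l1_norm v < (norm v)\<^sup>2"
proof -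
  have "0 < norm v"
    using large \<open>0 \<le> c\<close> by (smt (verit) mult_nonneg_nonneg real_sqrt_ge_zero of_nat_0_le_iff)
  have "c * l1_norm v \<le> c * (sqrt (CARD('n)) * norm v)"
    using \<open>0 \<le> c\<close> by (intro mult_left_mono l1_norm_le_sqrt_card_mult_norm)
  also have "\<dots> < norm v * norm v"
    using large \<open>0 < norm v\<close> by (simp add: mult.assoc[symmetric] mult_strict_right_mono)
  finally show ?thesis
    by (simp add: power2_eq_square)
qed

lemma mgd_step_displacement:
  "mgd_step \<alpha> x gx d - x = (\<chi> i. - \<alpha> * sgn (gx $ i) * indicator {d. d i} d)"
  by (simp add: mgd_step_def vec_eq_iff)
lemma inner_mgd_step_displacement:
  "gx \<bullet> (mgd_step \<alpha> x gx d - x) = - (\<Sum>i\<in>UNIV. \<alpha> * \<bar>gx $ i\<bar> * indicator {d. d i} d)"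
  unfolding mgd_step_displacement inner_vec_def sum_negf[symmetric]
  by (intro sum.cong) (auto simp: abs_sgn simp del: sum_mult_indicator)
lemma norm_mgd_step_displacement:
  "(norm (mgd_step \<alpha> x gx d - x))\<^sup>2
     = (\<Sum>i\<in>UNIV. \<alpha>\<^sup>2 * \<bar>sgn (gx $ i)\<bar> * indicator {d. d i} d)"
  unfolding mgd_step_displacement power2_norm_eq_inner inner_vec_def
  by (intro sum.cong) (auto simp: sgn_if power2_eq_square indicator_def simp del: sum_mult_indicator)

lemma mgd_step_upper_bound:
  fixes f :: "real^'n \<Rightarrow> real" and g :: "real^'n \<Rightarrow> real^'n"
  assumes grad: "\<And>y. (f has_derivative (\<lambda>h. g y \<bullet> h)) (at y)"
    and lip: "\<And>y z. norm (g y - g z) \<le> L * norm (y - z)"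
  shows "f (mgd_step \<alpha> x (g x) d)
     \<le> f x - (\<Sum>i\<in>UNIV. (\<alpha> * \<bar>g x $ i\<bar> - L / 2 * \<alpha>\<^sup>2 * \<bar>sgn (g x $ i)\<bar>) * indicator {d. d i} d)"
proof -
  let ?s = "mgd_step \<alpha> x (g x) d - x"
  have "f (mgd_step \<alpha> x (g x) d) = f (x + ?s)"
    by simp
  also have "\<dots> \<le> f x + g x \<bullet> ?s + L / 2 * (norm ?s)\<^sup>2"
    by (rule lipschitz_gradient_upper_bound[OF grad lip])
  also have "\<dots> = f x - (\<Sum>i\<in>UNIV. (\<alpha> * \<bar>g x $ i\<bar> - L / 2 * \<alpha>\<^sup>2 * \<bar>sgn (g x $ i)\<bar>) * indicator {d. d i} d)"
    unfolding inner_mgd_step_displacement norm_mgd_step_displacement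
    by (simp add: sum_distrib_left sum_subtractf algebra_simps del: sum_mult_indicator)
  finally show ?thesis .
qed

lemma pmf_expectation_sum_indicator:
  fixes D :: "'a pmf" and c :: "'i \<Rightarrow> real"
  assumes "finite I"
  shows "measure_pmf.expectation D (\<lambda>d. \<Sum>i\<in>I. c i * indicator (A i) d)
       = (\<Sum>i\<in>I. c i * measure_pmf.prob D (A i))"
  using assms
  by (subst Bochner_Integration.integral_sum)
     (auto simp del: sum_mult_indicator intro!: integrable_real_indicator simp: less_top[symmetric])

lemma mgd_expectation_upper_bound:
  fixes f :: "real^'n \<Rightarrow> real" and g :: "real^'n \<Rightarrow> real^'n"
    and D :: "('n \<Rightarrow> bool) pmf"
  assumes grad: "\<And>y. (f has_derivative (\<lambda>h. g y \<bullet> h)) (at y)"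
    and lip: "\<And>y z. norm (g y - g z) \<le> L * norm (y - z)"
    and eta: "\<eta> > 0"
    and event: "linf_norm (g x) \<le> \<eta>"
    and marg: "\<And>i. measure_pmf.prob D {d. d i} = mgd_prob \<eta> (g x) i"
  shows "measure_pmf.expectation D (\<lambda>d. f (mgd_step \<alpha> x (g x) d))
     \<le> f x - \<alpha> / \<eta> * ((norm (g x))\<^sup>2 - L * \<alpha> / 2 * l1_norm (g x))"
proof -
  define c where "c i = \<alpha> * \<bar>g x $ i\<bar> - L / 2 * \<alpha>\<^sup>2 * \<bar>sgn (g x $ i)\<bar>" for i
  have prob: "measure_pmf.prob D {d. d i} = \<bar>g x $ i\<bar> / \<eta>" for i
    using marg[of i] abs_nth_le_linf_norm[of "g x" i] event eta
    unfolding mgd_prob_def by auto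
  have finite_D: "finite (set_pmf D)"
    by (rule finite_subset[of _ UNIV]) auto
  have "measure_pmf.expectation D (\<lambda>d. f (mgd_step \<alpha> x (g x) d))
      \<le> measure_pmf.expectation D (\<lambda>d. f x - (\<Sum>i\<in>UNIV. c i * indicator {d. d i} d))"
    using mgd_step_upper_bound[OF grad lip] unfolding c_def
    by (intro integral_mono integrable_measure_pmf_finite[OF finite_D])
  also have "\<dots> = f x - (\<Sum>i\<in>UNIV. c i * measure_pmf.prob D {d. d i})"
    by (subst Bochner_Integration.integral_diff)
       (auto intro!: integrable_measure_pmf_finite[OF finite_D] simp: pmf_expectation_sum_indicator
             simp del: sum_mult_indicator)
  also have "(\<Sum>i\<in>UNIV. c i * measure_pmf.prob D {d. d i})
      = (\<Sum>i\<in>UNIV. \<alpha> / \<eta> * ((g x $ i)\<^sup>2 - L * \<alpha> / 2 * \<bar>g x $ i\<bar>))"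
    unfolding prob c_def by (intro sum.cong) (auto simp: sgn_if power2_eq_square field_simps)
  also have "\<dots> = \<alpha> / \<eta> * ((norm (g x))\<^sup>2 - L * \<alpha> / 2 * l1_norm (g x))"
    unfolding power2_norm_eq_inner inner_vec_def l1_norm_def
    by (simp add: sum_subtractf[symmetric] sum_distrib_left sum_divide_distrib power2_eq_square)
  finally show ?thesis .
qed

theorem corollary6p2:
  fixes f :: "real^'n \<Rightarrow> real" and g :: "real^'n \<Rightarrow> real^'n"
    and L \<alpha> \<eta> :: real and x :: "real^'n" and D :: "('n \<Rightarrow> bool) pmf"
  assumes grad: "\<And>y. (f has_derivative (\<lambda>h. g y \<bullet> h)) (at y)"
    and lip: "\<And>y z. norm (g y - g z) \<le> L * norm (y - z)"
    and alpha: "\<alpha> > 0" and eta: "\<eta> > 0"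
    and event: "linf_norm (g x) \<le> \<eta>"
    and marg: "\<And>i. measure_pmf.prob D {d. d i} = mgd_prob \<eta> (g x) i"
  shows "(L * \<alpha> / 2 * l1_norm (g x) < (norm (g x))\<^sup>2 \<longrightarrow>
            measure_pmf.expectation D (\<lambda>d. f (mgd_step \<alpha> x (g x) d)) < f x)
       \<and> (norm (g x) > L * \<alpha> * sqrt (CARD('n)) / 2 \<longrightarrow>
            measure_pmf.expectation D (\<lambda>d. f (mgd_step \<alpha> x (g x) d)) < f x)"
proof -
  have decrease: "measure_pmf.expectation D (\<lambda>d. f (mgd_step \<alpha> x (g x) d)) < f x"
    if "L * \<alpha> / 2 * l1_norm (g x) < (norm (g x))\<^sup>2"
  proof -
    have "0 < \<alpha> / \<eta> * ((norm (g x))\<^sup>2 - L * \<alpha> / 2 * l1_norm (g x))"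
      using that alpha eta by simp
    then show ?thesis
      using mgd_expectation_upper_bound[OF grad lip eta event marg, of \<alpha>] by linarith
  qed
  have "L \<ge> 0"
    using lipschitz_constant_nonneg[OF lip, of "axis undefined 1" 0] by (simp add: axis_eq_0_iff)
  then have "0 \<le> L * \<alpha> / 2"
    using alpha by simp
  moreover have "L * \<alpha> * sqrt (CARD('n)) / 2 = L * \<alpha> / 2 * sqrt (CARD('n))"
    by simp
  ultimately show ?thesis
    using decrease l1_norm_bound_if_norm_large[of "L * \<alpha> / 2" "g x"] by metis
qed

end
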